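(* Let $f_1,f_2,f_3$ be differentiable functions of three complex arguments such that, setting $x_{23}=f_1(x,x_2,x_3)$, $x_{31}=f_2(x,x_3,x_1)$, $x_{12}=f_3(x,x_1,x_2)$, one has $$f_1(x_1,x_{12},x_{31})\equiv f_2(x_2,x_{23},x_{12})\equiv f_3(x_3,x_{31},x_{23})$$ identically in $x,x_1,x_2,x_3$, and suppose that this common value $x_{123}=z(x,x_1,x_2,x_3)$ does not depend on $x$. Then, identically in $x,x_1,x_2,x_3$, $$f_{3,x_2}\,f_{2,x_1}\,f_{1,x_3}=-f_{3,x_1}\,f_{2,x_3}\,f_{1,x_2},$$ where $f_{3,x_j}$ denotes the partial derivative of $f_3$ with respect to the argument occupied by $x_j$ in $f_3(x,x_1,x_2)$ (evaluated there), and similarly $f_{2,x_j}$ refers to $f_2(x,x_3,x_1)$ and $f_{1,x_j}$ to $f_1(x,x_2,x_3)$. *)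

theory Defs
  imports "HOL-Analysis.Analysis"
begin

definition cdiff3 :: "(complex \<Rightarrow> complex \<Rightarrow> complex \<Rightarrow> complex) \<Rightarrow> bool" where
  "cdiff3 f \<longleftrightarrow> (\<forall>p q r. \<exists>a b c.
     ((\<lambda>(u, v, w). f u v w) has_derivative (\<lambda>(u, v, w). a * u + b * v + c * w))
       (at (p, q, r)))"

definition pd1 :: "(complex \<Rightarrow> complex \<Rightarrow> complex \<Rightarrow> complex) \<Rightarrow> complex \<Rightarrow> complex \<Rightarrow> complex \<Rightarrow> complex" where
  "pd1 f p q r = deriv (\<lambda>t. f t q r) p"
definition pd2 :: "(complex \<Rightarrow> complex \<Rightarrow> complex \<Rightarrow> complex) \<Rightarrow> complex \<Rightarrow> complex \<Rightarrow> complex \<Rightarrow> complex" where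
  "pd2 f p q r = deriv (\<lambda>t. f p t r) q"
definition pd3 :: "(complex \<Rightarrow> complex \<Rightarrow> complex \<Rightarrow> complex) \<Rightarrow> complex \<Rightarrow> complex \<Rightarrow> complex \<Rightarrow> complex" where
  "pd3 f p q r = deriv (\<lambda>t. f p q t) r"

end

theory Submission
  imports Defs "HOL-Complex_Analysis.Complex_Analysis"
begin

(*
  Write p, q, r for the x-derivatives of the inner maps f3(x,x1,x2), f2(x,x3,x1), f1(x,x2,x3),
  P3, P2, P1 and Q3, Q2, Q1 for their derivatives in the middle and in the last argument, and
  T = Q3 Q2 Q1 + P3 P2 P1.  Differentiating the three expressions for x123 in x, x1, x2 and x3
  gives nine linear relations between these numbers and the partial derivatives of the outer
  maps at the corner (x1, x12, x31) etc.  Suppose that Q3 Q2 Q1 T is nonzero on an open set.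

  If no f_i is independent of x, then by the identity theorem p q r is nonzero somewhere in
  that set, and there the relations force the middle partial derivative of the outer f1 to
  vanish.  Hence x123 does not depend on x2 either; as x and x2 move the two inner arguments
  x31 and x12 of f1 through open sets (open mapping theorem), f1 cannot depend on its last
  argument, contradicting Q1 <> 0.  If some f_i is independent of x, a similar open mapping
  argument shows that all three are, and then the relations force the middle and last partial
  derivatives of the outer f1 to vanish, with the same contradiction.

  Hence T = 0 wherever Q3 Q2 Q1 <> 0.  Swapping the last two arguments of all f_i exchanges
  the P's and Q's, which covers the points where P3 P2 P1 <> 0; elsewhere both sides vanish.
*)

section \<open>Complex differentiable functions of three variables\<close>

lemma cdiff3_has_derivative:
  assumes "cdiff3 f"
  shows "((\<lambda>(u, v, w). f u v w) has_derivative
     (\<lambda>(h1, h2, h3). pd1 f p q r * h1 + pd2 f p q r * h2 + pd3 f p q r * h3)) (at (p, q, r))"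
proof -
  obtain a b c where D: "((\<lambda>(u, v, w). f u v w) has_derivative (\<lambda>(u, v, w). a * u + b * v + c * w))
      (at (p, q, r))"
    using assms unfolding cdiff3_def by blast
  have lines: "((\<lambda>t. (t, q, r)) has_derivative (\<lambda>h. (h, 0, 0))) (at p)"
    "((\<lambda>t. (p, t, r)) has_derivative (\<lambda>h. (0, h, 0))) (at q)"
    "((\<lambda>t. (p, q, t)) has_derivative (\<lambda>h. (0, 0, h))) (at r)"
    by (auto intro!: derivative_eq_intros simp: zero_prod_def)
  have "((\<lambda>t. f t q r) has_field_derivative a) (at p)"
    "((\<lambda>t. f p t r) has_field_derivative b) (at q)"
    "((\<lambda>t. f p q t) has_field_derivative c) (at r)"
    using has_derivative_compose[OF lines(1) D] has_derivative_compose[OF lines(2) D]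
      has_derivative_compose[OF lines(3) D]
    by (simp_all add: has_field_derivative_def mult_commute_abs)
  then show ?thesis
    using D unfolding pd1_def pd2_def pd3_def by (simp add: DERIV_imp_deriv)
qed

lemma has_field_derivative_cdiff3_compose:
  assumes "cdiff3 f"
    and "(\<alpha> has_field_derivative a) (at t within S)"
    and "(\<beta> has_field_derivative b) (at t within S)"
    and "(\<gamma> has_field_derivative c) (at t within S)"
  shows "((\<lambda>t. f (\<alpha> t) (\<beta> t) (\<gamma> t)) has_field_derivative
     pd1 f (\<alpha> t) (\<beta> t) (\<gamma> t) * a + pd2 f (\<alpha> t) (\<beta> t) (\<gamma> t) * b + pd3 f (\<alpha> t) (\<beta> t) (\<gamma> t) * c)
     (at t within S)"
proof -
  have "((\<lambda>t. (\<alpha> t, \<beta> t, \<gamma> t)) has_derivative (\<lambda>h. (a * h, b * h, c * h))) (at t within S)"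
    using assms(2-4) unfolding has_field_derivative_def by (auto intro!: has_derivative_Pair)
  from has_derivative_in_compose[OF this
      has_derivative_at_withinI[OF cdiff3_has_derivative[OF assms(1)]]]
  have "((\<lambda>t. f (\<alpha> t) (\<beta> t) (\<gamma> t)) has_derivative (\<lambda>h. pd1 f (\<alpha> t) (\<beta> t) (\<gamma> t) * (a * h)
      + pd2 f (\<alpha> t) (\<beta> t) (\<gamma> t) * (b * h) + pd3 f (\<alpha> t) (\<beta> t) (\<gamma> t) * (c * h))) (at t within S)"
    by (simp add: o_def)
  then show ?thesis
    unfolding has_field_derivative_def
    by (rule has_derivative_eq_rhs) (auto simp: fun_eq_iff algebra_simps)
qed

lemma has_field_derivative_pd:
  assumes "cdiff3 f"
  shows "((\<lambda>t. f t v w) has_field_derivative pd1 f u v w) (at u)"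
    and "((\<lambda>t. f u t w) has_field_derivative pd2 f u v w) (at v)"
    and "((\<lambda>t. f u v t) has_field_derivative pd3 f u v w) (at w)"
  using has_field_derivative_cdiff3_compose[OF assms, where S = UNIV]
  by (fastforce intro: DERIV_ident DERIV_const)+

lemma cdiff3_holomorphic:
  assumes "cdiff3 f"
  shows "(\<lambda>t. f t v w) holomorphic_on S" "(\<lambda>t. f u t w) holomorphic_on S" "f u v holomorphic_on S"
  using has_field_derivative_pd[OF assms]
  unfolding holomorphic_on_def field_differentiable_def
  by (metis has_field_derivative_at_within)+

lemma pd1_eq_0_if_indep_first:
  assumes "\<And>u. f u = f 0"
  shows "pd1 f u v w = 0"
proof -
  have "(\<lambda>t. f t v w) = (\<lambda>t. f 0 v w)"
    using assms by (intro ext) metis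
  then show ?thesis by (simp add: pd1_def)
qed

lemma cdiff3_swap23:
  assumes "cdiff3 f"
  shows "cdiff3 (\<lambda>u v w. f u w v)"
  unfolding cdiff3_def
proof (intro allI)
  fix p q r :: complex
  define swap :: "complex \<times> complex \<times> complex \<Rightarrow> _" where "swap = (\<lambda>(u, v, w). (u, w, v))"
  have "swap (p, q, r) = (p, r, q)" by (simp add: swap_def)
  then obtain a b c where D: "((\<lambda>(u, v, w). f u v w) has_derivative
      (\<lambda>(u, v, w). a * u + b * v + c * w)) (at (swap (p, q, r)))"
    using assms unfolding cdiff3_def by metis
  have "(swap has_derivative swap) (at (p, q, r))"
    unfolding swap_def by (auto intro!: derivative_eq_intros simp: split_beta')
  from has_derivative_compose[OF this D]
  have "((\<lambda>x. (\<lambda>(u, v, w). f u v w) (swap x)) has_derivative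
      (\<lambda>x. (\<lambda>(u, v, w). a * u + b * v + c * w) (swap x))) (at (p, q, r))" .
  moreover have "(\<lambda>x. (\<lambda>(u, v, w). f u v w) (swap x)) = (\<lambda>(u, v, w). f u w v)"
    "(\<lambda>x. (\<lambda>(u, v, w). a * u + b * v + c * w) (swap x)) = (\<lambda>(u, v, w). a * u + c * v + b * w)"
    by (auto simp: swap_def fun_eq_iff)
  ultimately show "\<exists>a b c. ((\<lambda>(u, v, w). f u w v) has_derivative
      (\<lambda>(u, v, w). a * u + b * v + c * w)) (at (p, q, r))"
    by auto
qed

lemma uniform_limit_translates:
  fixes g :: "'a::heine_borel \<Rightarrow> complex \<Rightarrow> complex"
  assumes cont: "continuous_on UNIV (\<lambda>(a, t). g a t)"
  shows "uniform_limit (ball t0 1) (\<lambda>(a, t) u. g a (u + (t - t0))) (g a0) (nhds (a0, t0))"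
proof (rule uniform_limitI)
  fix \<epsilon> :: real assume "\<epsilon> > 0"
  define K where "K = cball a0 1 \<times> cball t0 2"
  have "uniformly_continuous_on K (\<lambda>(a, t). g a t)"
    unfolding K_def by (intro compact_uniformly_continuous continuous_on_subset[OF cont]
      compact_Times compact_cball) auto
  then obtain \<delta> where "\<delta> > 0" and \<delta>: "\<And>y y'. y \<in> K \<Longrightarrow> y' \<in> K \<Longrightarrow> dist y' y < \<delta> \<Longrightarrow>
      dist ((\<lambda>(a, t). g a t) y') ((\<lambda>(a, t). g a t) y) < \<epsilon>"
    unfolding uniformly_continuous_on_def using \<open>\<epsilon> > 0\<close> by metis
  have "\<forall>\<^sub>F (a, t) in nhds (a0, t0). dist (a, t) (a0, t0) < min 1 \<delta>"
    using eventually_nhds_metric \<open>\<delta> > 0\<close>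
    by (metis (mono_tags, lifting) case_prodI2 min_less_iff_conj zero_less_one)
  then show "\<forall>\<^sub>F x in nhds (a0, t0). \<forall>u\<in>ball t0 1.
      dist ((\<lambda>(a, t) u. g a (u + (t - t0))) x u) (g a0 u) < \<epsilon>"
  proof (rule eventually_mono, safe)
    fix a t u assume close: "dist (a, t) (a0, t0) < min 1 \<delta>" and "u \<in> ball t0 1"
    have "dist a a0 < 1" "dist t t0 < 1"
      using close dist_fst_le[of "(a, t)" "(a0, t0)"] dist_snd_le[of "(a, t)" "(a0, t0)"] by auto
    moreover have "norm ((t0 - u) + (t0 - t)) \<le> norm (t0 - u) + norm (t0 - t)"
      by (rule norm_triangle_ineq)
    ultimately have "(a, u + (t - t0)) \<in> K" "(a0, u) \<in> K"
      using \<open>u \<in> ball t0 1\<close> unfolding K_def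
      by (auto simp: dist_norm norm_minus_commute algebra_simps dist_commute)
    moreover have "dist (a, u + (t - t0)) (a0, u) = dist (a, t) (a0, t0)"
      by (simp add: dist_Pair_Pair dist_norm)
    ultimately show "dist (g a (u + (t - t0))) (g a0 u) < \<epsilon>"
      using \<delta> close by fastforce
  qed
qed

lemma continuous_on_deriv_param:
  fixes g :: "'a::heine_borel \<Rightarrow> complex \<Rightarrow> complex"
  assumes cont: "continuous_on UNIV (\<lambda>(a, t). g a t)" and hol: "\<And>a. g a holomorphic_on UNIV"
  shows "continuous_on UNIV (\<lambda>(a, t). deriv (g a) t)"
proof -
  have "isCont (\<lambda>(a, t). deriv (g a) t) (a0, t0)" for a0 t0
  proof -
    \<comment> \<open>deriv (g a) t is the derivative at t0 of a translate of g a, and these translates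
      converge locally uniformly as (a, t) tends to (a0, t0).\<close>
    define h where "h = (\<lambda>(a, t) u. g a (u + (t - t0)))"
    have "uniform_limit (ball t0 1) h (g a0) (nhds (a0, t0))"
      unfolding h_def by (rule uniform_limit_translates[OF cont])
    moreover have "(\<lambda>u. g a (u + c)) holomorphic_on S" for a c S
    proof -
      have "(g a \<circ> (\<lambda>u. u + c)) holomorphic_on S"
        by (intro holomorphic_on_compose holomorphic_intros holomorphic_on_subset[OF hol]) auto
      then show ?thesis by (simp add: o_def)
    qed
    then have "\<forall>\<^sub>F x in nhds (a0, t0). h x holomorphic_on ball t0 1"
      by (simp add: h_def split: prod.splits)
    ultimately have "((\<lambda>x. deriv (h x) t0) \<longlongrightarrow> deriv (g a0) t0) (nhds (a0, t0))"
      by (intro deriv_complex_uniform_limit) auto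
    moreover have "(\<lambda>x. deriv (h x) t0) = (\<lambda>(a, t). deriv (g a) t)"
    proof (intro ext, clarify)
      fix a t
      have "((\<lambda>u. g a (u + (t - t0))) has_field_derivative deriv (g a) t) (at t0)"
        using DERIV_shift[of "g a" "deriv (g a) t" t0 "t - t0"]
          holomorphic_derivI[OF hol open_UNIV UNIV_I, of a t] by simp
      then show "deriv (h (a, t)) t0 = deriv (g a) t"
        unfolding h_def by (simp add: DERIV_imp_deriv)
    qed
    ultimately show ?thesis
      unfolding continuous_at tendsto_at_iff_tendsto_nhds by simp
  qed
  then show ?thesis
    by (intro continuous_at_imp_continuous_on) auto
qed

lemma continuous_on_compose3:
  assumes "continuous_on UNIV (\<lambda>(u, v, w). F u v w)"
    and "continuous_on S \<alpha>" "continuous_on S \<beta>" "continuous_on S \<gamma>"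
  shows "continuous_on S (\<lambda>s. F (\<alpha> s) (\<beta> s) (\<gamma> s))"
  using continuous_on_compose2[OF assms(1), of S "\<lambda>s. (\<alpha> s, \<beta> s, \<gamma> s)"] assms(2-4)
  by (simp add: continuous_on_Pair)

lemma cdiff3_continuous:
  assumes "cdiff3 f"
  shows "continuous_on UNIV (\<lambda>(u, v, w). f u v w)"
  by (auto intro!: continuous_at_imp_continuous_on
      has_derivative_continuous[OF cdiff3_has_derivative[OF assms]])

lemma continuous_on_pd:
  assumes "cdiff3 f"
  shows "continuous_on UNIV (\<lambda>(u, v, w). pd1 f u v w)"
    and "continuous_on UNIV (\<lambda>(u, v, w). pd2 f u v w)"
    and "continuous_on UNIV (\<lambda>(u, v, w). pd3 f u v w)"
proof -
  note f = cdiff3_continuous[OF assms] and hol = cdiff3_holomorphic[OF assms]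
  have "continuous_on UNIV (\<lambda>(a, t). deriv (\<lambda>t. f t (fst a) (snd a)) t)"
    by (rule continuous_on_deriv_param)
      (auto simp: split_beta' hol intro!: continuous_on_compose3[OF f] continuous_on_fst continuous_on_snd continuous_on_id)
  from continuous_on_compose2[OF this _ subset_UNIV, where f = "\<lambda>(u, v, w). ((v, w), u)"]
  show "continuous_on UNIV (\<lambda>(u, v, w). pd1 f u v w)"
    by (simp add: pd1_def split_beta' continuous_on_Pair continuous_on_fst continuous_on_snd)
  have "continuous_on UNIV (\<lambda>(a, t). deriv (\<lambda>t. f (fst a) t (snd a)) t)"
    by (rule continuous_on_deriv_param)
      (auto simp: split_beta' hol intro!: continuous_on_compose3[OF f] continuous_on_fst continuous_on_snd continuous_on_id)
  from continuous_on_compose2[OF this _ subset_UNIV, where f = "\<lambda>(u, v, w). ((u, w), v)"]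
  show "continuous_on UNIV (\<lambda>(u, v, w). pd2 f u v w)"
    by (simp add: pd2_def split_beta' continuous_on_Pair continuous_on_fst continuous_on_snd)
  have "continuous_on UNIV (\<lambda>(a, t). deriv (f (fst a) (snd a)) t)"
    by (rule continuous_on_deriv_param)
      (auto simp: split_beta' hol intro!: continuous_on_compose3[OF f] continuous_on_fst continuous_on_snd continuous_on_id)
  from continuous_on_compose2[OF this _ subset_UNIV, where f = "\<lambda>(u, v, w). ((u, v), w)"]
  show "continuous_on UNIV (\<lambda>(u, v, w). pd3 f u v w)"
    by (simp add: pd3_def split_beta' continuous_on_Pair continuous_on_fst continuous_on_snd)
qed

lemma continuous_on_pd_compose [continuous_intros]:
  assumes "cdiff3 f" "continuous_on S \<alpha>" "continuous_on S \<beta>" "continuous_on S \<gamma>"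
  shows "continuous_on S (\<lambda>s. pd1 f (\<alpha> s) (\<beta> s) (\<gamma> s))"
    and "continuous_on S (\<lambda>s. pd2 f (\<alpha> s) (\<beta> s) (\<gamma> s))"
    and "continuous_on S (\<lambda>s. pd3 f (\<alpha> s) (\<beta> s) (\<gamma> s))"
  using continuous_on_compose3[OF continuous_on_pd(1)[OF assms(1)] assms(2-4)]
    continuous_on_compose3[OF continuous_on_pd(2)[OF assms(1)] assms(2-4)]
    continuous_on_compose3[OF continuous_on_pd(3)[OF assms(1)] assms(2-4)]
  by simp_all

section \<open>Identity theorem and open mapping along slices\<close>

lemma entire_eq_const_on_open_image:
  fixes h \<phi> :: "complex \<Rightarrow> complex"
  assumes "h holomorphic_on UNIV" "\<phi> holomorphic_on UNIV" "deriv \<phi> t0 \<noteq> 0"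
    and "open S" "t0 \<in> S" "\<And>t. t \<in> S \<Longrightarrow> h (\<phi> t) = c"
  shows "h y = c"
proof (rule analytic_continuation_open[of "\<phi> ` S" UNIV h "\<lambda>_. c"])
  have "\<not> \<phi> constant_on UNIV"
    using assms(3) by (auto simp: constant_on_def fun_eq_iff[symmetric])
  then show "open (\<phi> ` S)"
    using assms by (intro open_mapping_thm[of _ UNIV]) auto
qed (use assms in auto)

lemma entire_eq_const_on_open:
  fixes h :: "complex \<Rightarrow> complex"
  assumes "h holomorphic_on UNIV" "open S" "t0 \<in> S" "\<And>t. t \<in> S \<Longrightarrow> h t = c"
  shows "h y = c"
  using entire_eq_const_on_open_image[of h "\<lambda>t. t" t0 S c y] assms by simp

lemma const_if_derivative_eq_0_on_open:
  fixes g g' :: "complex \<Rightarrow> complex"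
  assumes g: "\<And>t. (g has_field_derivative g' t) (at t)"
    and S: "open S" "t0 \<in> S" "\<And>t. t \<in> S \<Longrightarrow> g' t = 0"
  shows "g t = g t'"
proof -
  have "g holomorphic_on UNIV"
    using g holomorphic_on_open[of UNIV g] by auto
  then have "deriv g t = 0" for t
    using entire_eq_const_on_open[of "deriv g" S t0 0 t] holomorphic_deriv[of g UNIV] S
      DERIV_imp_deriv[OF g] by simp
  then have "(g has_field_derivative 0) (at t within UNIV)" for t
    using g DERIV_imp_deriv by metis
  then obtain c where "\<And>t. g t = c"
    using has_field_derivative_zero_constant[of UNIV g] by auto
  then show ?thesis by simp
qed

lemma separately_entire_const_from_open_maps:
  fixes G \<psi> :: "complex \<Rightarrow> complex \<Rightarrow> complex" and \<phi> :: "complex \<Rightarrow> complex"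
  assumes G: "\<And>w. (\<lambda>v. G v w) holomorphic_on UNIV" "\<And>v. G v holomorphic_on UNIV"
    and \<phi>: "\<phi> holomorphic_on UNIV" "open A" "a0 \<in> A" "deriv \<phi> a0 \<noteq> 0"
    and \<psi>: "\<And>a. \<psi> a holomorphic_on UNIV" "open B" "\<And>a. a \<in> A \<Longrightarrow> \<exists>b\<in>B. deriv (\<psi> a) b \<noteq> 0"
    and eq: "\<And>a b. a \<in> A \<Longrightarrow> b \<in> B \<Longrightarrow> G (\<psi> a b) (\<phi> a) = c"
  shows "G v w = c"
proof -
  have slice: "G v' (\<phi> a) = c" if a: "a \<in> A" for a v'
  proof -
    obtain b where b: "b \<in> B" "deriv (\<psi> a) b \<noteq> 0" using \<psi>(3) a by blast
    show ?thesis
      by (rule entire_eq_const_on_open_image[of "\<lambda>v. G v (\<phi> a)" "\<psi> a" b B])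
        (simp_all add: G \<psi> b eq a)
  qed
  show ?thesis
    by (rule entire_eq_const_on_open_image[of "G v" \<phi> a0 A]) (simp_all add: G \<phi> slice)
qed

lemma separately_entire_indep_second_from_open_maps:
  fixes G :: "complex \<Rightarrow> complex \<Rightarrow> complex" and \<phi> \<psi> :: "complex \<Rightarrow> complex"
  assumes G: "\<And>w. (\<lambda>v. G v w) holomorphic_on UNIV" "\<And>v. G v holomorphic_on UNIV"
    and \<phi>: "\<phi> holomorphic_on UNIV" "deriv \<phi> a0 \<noteq> 0"
    and \<psi>: "\<psi> holomorphic_on UNIV" "deriv \<psi> b0 \<noteq> 0"
    and eq: "\<And>a b. G (\<psi> b) (\<phi> a) = G (\<psi> b) (\<phi> a0)"
  shows "G v w = G v w'"
proof -
  have const: "G (\<psi> b) w = G (\<psi> b) (\<phi> a0)" for b w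
    by (rule entire_eq_const_on_open_image[of "G (\<psi> b)" \<phi> a0 UNIV]) (auto simp: G \<phi> intro: eq)
  have "G v w - G v w' = 0"
    by (rule entire_eq_const_on_open_image[of "\<lambda>v. G v w - G v w'" \<psi> b0 UNIV])
      (auto simp: G \<psi> holomorphic_on_diff const[of _ w] const[of _ w'])
  then show ?thesis by simp
qed

lemma cdiff3_indep_first_if_pd1_eq_0:
  assumes f: "cdiff3 f"
    and UVW: "open U" "open V" "open W" "u0 \<in> U" "v0 \<in> V" "w0 \<in> W"
    and pd1: "\<And>u v w. u \<in> U \<Longrightarrow> v \<in> V \<Longrightarrow> w \<in> W \<Longrightarrow> pd1 f u v w = 0"
  shows "f u = f 0"
proof -
  note hol = cdiff3_holomorphic[OF f]
  have box: "f u v w - f 0 v w = 0" if "v \<in> V" "w \<in> W" for v w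
    using const_if_derivative_eq_0_on_open[OF has_field_derivative_pd(1)[OF f] UVW(1,4)] pd1 that
    by simp
  have "f u v w - f 0 v w = 0" if "v \<in> V" for v w
    using entire_eq_const_on_open[of "\<lambda>w. f u v w - f 0 v w" W w0 0 w] hol UVW box that
    by (simp add: holomorphic_on_diff)
  then have "f u v w - f 0 v w = 0" for v w
    using entire_eq_const_on_open[of "\<lambda>v. f u v w - f 0 v w" V v0 0 v] hol UVW
    by (simp add: holomorphic_on_diff)
  then have "f u v w = f 0 v w" for v w
    by (simp only: right_minus_eq)
  then show ?thesis by (intro ext)
qed

lemma cdiff3_pd3_eq_0_if_indep_third:
  assumes f: "cdiff3 f" and U: "open U" "u0 \<in> U"
    and indep: "\<And>u v w. u \<in> U \<Longrightarrow> f u v w = f u v 0"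
  shows "pd3 f u v w = 0"
proof -
  note hol = cdiff3_holomorphic[OF f]
  have "f u v t - f u v 0 = 0" for t
    using entire_eq_const_on_open[of "\<lambda>u. f u v t - f u v 0" U u0 0 u] hol U indep[of _ v t]
    by (simp add: holomorphic_on_diff)
  then have "deriv (f u v) w = deriv (\<lambda>_. f u v 0) w"
    by (intro arg_cong[where f = "\<lambda>g. deriv g w"] ext) simp
  then show ?thesis by (simp add: pd3_def)
qed

section \<open>Tetrahedral systems and the chain rule\<close>

locale tetrahedral_system =
  fixes f1 f2 f3 :: "complex \<Rightarrow> complex \<Rightarrow> complex \<Rightarrow> complex"
  assumes cdiff: "cdiff3 f1" "cdiff3 f2" "cdiff3 f3"
    and consistent12: "f1 x1 (f3 x x1 x2) (f2 x x3 x1) = f2 x2 (f1 x x2 x3) (f3 x x1 x2)"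
    and consistent23: "f2 x2 (f1 x x2 x3) (f3 x x1 x2) = f3 x3 (f2 x x3 x1) (f1 x x2 x3)"
    and tetrahedral: "f1 x1 (f3 x x1 x2) (f2 x x3 x1) = f1 x1 (f3 x' x1 x2) (f2 x' x3 x1)"

sublocale tetrahedral_system \<subseteq> rotated: tetrahedral_system f2 f3 f1
proof unfold_locales
  fix x x' x1 x2 x3
  note c12 = consistent12[where ?x1.0 = x3 and ?x2.0 = x1 and ?x3.0 = x2]
    and c23 = consistent23[where ?x1.0 = x3 and ?x2.0 = x1 and ?x3.0 = x2]
  show "f2 x1 (f1 x x1 x2) (f3 x x3 x1) = f3 x2 (f2 x x2 x3) (f1 x x1 x2)"
    by (rule c23)
  show "f3 x2 (f2 x x2 x3) (f1 x x1 x2) = f1 x3 (f3 x x3 x1) (f2 x x2 x3)"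
    using c12 c23 by simp
  show "f2 x1 (f1 x x1 x2) (f3 x x3 x1) = f2 x1 (f1 x' x1 x2) (f3 x' x3 x1)"
    using c12 consistent12[where x = x' and ?x1.0 = x3 and ?x2.0 = x1 and ?x3.0 = x2]
      tetrahedral[where ?x1.0 = x3 and ?x2.0 = x1 and ?x3.0 = x2] by simp
qed (rule cdiff)+

lemma tetrahedral_system_swap:
  assumes "tetrahedral_system f1 f2 f3"
  shows "tetrahedral_system (\<lambda>u v w. f1 u w v) (\<lambda>u v w. f3 u w v) (\<lambda>u v w. f2 u w v)"
proof -
  interpret tetrahedral_system f1 f2 f3 by fact
  show ?thesis
  proof unfold_locales
    fix x x' x1 x2 x3
    note c12 = consistent12[where ?x2.0 = x3 and ?x3.0 = x2]
      and c23 = consistent23[where ?x2.0 = x3 and ?x3.0 = x2]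
    show "f1 x1 (f3 x x1 x3) (f2 x x2 x1) = f3 x2 (f2 x x2 x1) (f1 x x3 x2)"
      using c12 c23 by simp
    show "f3 x2 (f2 x x2 x1) (f1 x x3 x2) = f2 x3 (f1 x x3 x2) (f3 x x1 x3)"
      using c23 by simp
    show "f1 x1 (f3 x x1 x3) (f2 x x2 x1) = f1 x1 (f3 x' x1 x3) (f2 x' x2 x1)"
      by (rule tetrahedral)
  qed (use cdiff cdiff3_swap23 in blast)+
qed

context tetrahedral_system
begin

lemma corner_derivatives:
  fixes x x1 x2 x3 :: complex
  defines "x12 \<equiv> f3 x x1 x2" and "x31 \<equiv> f2 x x3 x1"
  shows "((\<lambda>t. f1 x1 (f3 t x1 x2) (f2 t x3 x1)) has_field_derivative
      pd2 f1 x1 x12 x31 * pd1 f3 x x1 x2 + pd3 f1 x1 x12 x31 * pd1 f2 x x3 x1) (at x)"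
    and "((\<lambda>t. f1 t (f3 x t x2) (f2 x x3 t)) has_field_derivative
      pd1 f1 x1 x12 x31 + pd2 f1 x1 x12 x31 * pd2 f3 x x1 x2 + pd3 f1 x1 x12 x31 * pd3 f2 x x3 x1) (at x1)"
    and "((\<lambda>t. f1 x1 (f3 x x1 t) (f2 x x3 x1)) has_field_derivative
      pd2 f1 x1 x12 x31 * pd3 f3 x x1 x2) (at x2)"
    and "((\<lambda>t. f1 x1 (f3 x x1 x2) (f2 x t x1)) has_field_derivative
      pd3 f1 x1 x12 x31 * pd2 f2 x x3 x1) (at x3)"
  unfolding x12_def x31_def
  using has_field_derivative_cdiff3_compose[OF cdiff(1) DERIV_const
      has_field_derivative_pd(1)[OF cdiff(3)] has_field_derivative_pd(1)[OF cdiff(2)]]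
    has_field_derivative_cdiff3_compose[OF cdiff(1) DERIV_ident
      has_field_derivative_pd(2)[OF cdiff(3)] has_field_derivative_pd(3)[OF cdiff(2)]]
    has_field_derivative_cdiff3_compose[OF cdiff(1) DERIV_const
      has_field_derivative_pd(3)[OF cdiff(3)] DERIV_const]
    has_field_derivative_cdiff3_compose[OF cdiff(1) DERIV_const
      DERIV_const has_field_derivative_pd(2)[OF cdiff(2)]]
  by simp_all

end

context tetrahedral_system
begin

(* The three expressions for x123 have equal derivatives in x1, x2, x3 and zero derivative in x. *)
lemma chain_rule_identities:
  fixes x x1 x2 x3 :: complex
  defines "x12 \<equiv> f3 x x1 x2" and "x31 \<equiv> f2 x x3 x1" and "x23 \<equiv> f1 x x2 x3"
  shows "pd2 f1 x1 x12 x31 * pd1 f3 x x1 x2 + pd3 f1 x1 x12 x31 * pd1 f2 x x3 x1 = 0"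
    and "pd2 f2 x2 x23 x12 * pd1 f1 x x2 x3 + pd3 f2 x2 x23 x12 * pd1 f3 x x1 x2 = 0"
    and "pd2 f3 x3 x31 x23 * pd1 f2 x x3 x1 + pd3 f3 x3 x31 x23 * pd1 f1 x x2 x3 = 0"
    and "pd1 f1 x1 x12 x31 + pd2 f1 x1 x12 x31 * pd2 f3 x x1 x2 + pd3 f1 x1 x12 x31 * pd3 f2 x x3 x1
      = pd3 f2 x2 x23 x12 * pd2 f3 x x1 x2"
    and "pd3 f2 x2 x23 x12 * pd2 f3 x x1 x2 = pd2 f3 x3 x31 x23 * pd3 f2 x x3 x1"
    and "pd2 f1 x1 x12 x31 * pd3 f3 x x1 x2
      = pd1 f2 x2 x23 x12 + pd2 f2 x2 x23 x12 * pd2 f1 x x2 x3 + pd3 f2 x2 x23 x12 * pd3 f3 x x1 x2"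
    and "pd1 f2 x2 x23 x12 + pd2 f2 x2 x23 x12 * pd2 f1 x x2 x3 + pd3 f2 x2 x23 x12 * pd3 f3 x x1 x2
      = pd3 f3 x3 x31 x23 * pd2 f1 x x2 x3"
    and "pd3 f1 x1 x12 x31 * pd2 f2 x x3 x1 = pd2 f2 x2 x23 x12 * pd3 f1 x x2 x3"
    and "pd2 f2 x2 x23 x12 * pd3 f1 x x2 x3
      = pd1 f3 x3 x31 x23 + pd2 f3 x3 x31 x23 * pd2 f2 x x3 x1 + pd3 f3 x3 x31 x23 * pd3 f1 x x2 x3"
proof -
  have same: "a = b" if "(F has_field_derivative a) (at t)" "(G has_field_derivative b) (at t)"
    "\<And>s. F s = G s" for F G a b and t :: complex
    using that DERIV_unique[of F a t b] by (metis ext)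
  note d1 = corner_derivatives[where ?x1.0 = x1 and ?x2.0 = x2 and ?x3.0 = x3]
    and d2 = rotated.corner_derivatives[where ?x1.0 = x2 and ?x2.0 = x3 and ?x3.0 = x1]
    and d3 = rotated.rotated.corner_derivatives[where ?x1.0 = x3 and ?x2.0 = x1 and ?x3.0 = x2]
  have const1: "f1 x1 (f3 s x1 x2) (f2 s x3 x1) = f1 x1 (f3 x x1 x2) (f2 x x3 x1)" for s
    by (rule tetrahedral)
  have const2: "f2 x2 (f1 s x2 x3) (f3 s x1 x2) = f1 x1 (f3 x x1 x2) (f2 x x3 x1)" for s
    by (rule trans[OF consistent12[symmetric] const1])
  have const3: "f3 x3 (f2 s x3 x1) (f1 s x2 x3) = f1 x1 (f3 x x1 x2) (f2 x x3 x1)" for s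
    by (rule trans[OF consistent23[symmetric] const2])
  show "pd2 f1 x1 x12 x31 * pd1 f3 x x1 x2 + pd3 f1 x1 x12 x31 * pd1 f2 x x3 x1 = 0"
    using same[OF d1(1) DERIV_const const1] by (simp add: x12_def x31_def)
  show "pd2 f2 x2 x23 x12 * pd1 f1 x x2 x3 + pd3 f2 x2 x23 x12 * pd1 f3 x x1 x2 = 0"
    using same[OF d2(1) DERIV_const const2] by (simp add: x12_def x23_def)
  show "pd2 f3 x3 x31 x23 * pd1 f2 x x3 x1 + pd3 f3 x3 x31 x23 * pd1 f1 x x2 x3 = 0"
    using same[OF d3(1) DERIV_const const3] by (simp add: x31_def x23_def)
  show "pd1 f1 x1 x12 x31 + pd2 f1 x1 x12 x31 * pd2 f3 x x1 x2 + pd3 f1 x1 x12 x31 * pd3 f2 x x3 x1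
      = pd3 f2 x2 x23 x12 * pd2 f3 x x1 x2"
    using same[OF d1(2) d2(4) consistent12] by (simp add: x12_def x31_def x23_def)
  show "pd3 f2 x2 x23 x12 * pd2 f3 x x1 x2 = pd2 f3 x3 x31 x23 * pd3 f2 x x3 x1"
    using same[OF d2(4) d3(3) consistent23] by (simp add: x12_def x31_def x23_def)
  show "pd2 f1 x1 x12 x31 * pd3 f3 x x1 x2
      = pd1 f2 x2 x23 x12 + pd2 f2 x2 x23 x12 * pd2 f1 x x2 x3 + pd3 f2 x2 x23 x12 * pd3 f3 x x1 x2"
    using same[OF d1(3) d2(2) consistent12] by (simp add: x12_def x31_def x23_def)
  show "pd1 f2 x2 x23 x12 + pd2 f2 x2 x23 x12 * pd2 f1 x x2 x3 + pd3 f2 x2 x23 x12 * pd3 f3 x x1 x2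
      = pd3 f3 x3 x31 x23 * pd2 f1 x x2 x3"
    using same[OF d2(2) d3(4) consistent23] by (simp add: x12_def x31_def x23_def)
  show "pd3 f1 x1 x12 x31 * pd2 f2 x x3 x1 = pd2 f2 x2 x23 x12 * pd3 f1 x x2 x3"
    using same[OF d1(4) d2(3) consistent12] by (simp add: x12_def x31_def x23_def)
  show "pd2 f2 x2 x23 x12 * pd3 f1 x x2 x3
      = pd1 f3 x3 x31 x23 + pd2 f3 x3 x31 x23 * pd2 f2 x x3 x1 + pd3 f3 x3 x31 x23 * pd3 f1 x x2 x3"
    using same[OF d2(3) d3(2) consistent23] by (simp add: x12_def x31_def x23_def)
qed

end

(* Eliminating A1, B1, C1 leaves six linear equations in A2, ..., C3 with determinant
   p q r (Q3 Q2 Q1 + P3 P2 P1). *)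
lemma outer_derivative_eq_0_generic:
  fixes A1 A2 A3 B1 B2 B3 C1 C2 C3 p q r P1 P2 P3 Q1 Q2 Q3 :: complex
  assumes "A2 * p + A3 * q = 0" "B2 * r + B3 * p = 0" "C2 * q + C3 * r = 0"
    "A1 + A2 * P3 + A3 * Q2 = B3 * P3" "B3 * P3 = C2 * Q2"
    "A2 * Q3 = B1 + B2 * P1 + B3 * Q3" "B1 + B2 * P1 + B3 * Q3 = C3 * P1"
    "A3 * P2 = B2 * Q1" "B2 * Q1 = C1 + C2 * P2 + C3 * Q1"
    and "p * q * r * (Q3 * Q2 * Q1 + P3 * P2 * P1) \<noteq> 0"
  shows "A2 = 0"
proof -
  have "A2 * (p * q * r * (Q3 * Q2 * Q1 + P3 * P2 * P1)) = 0"
    using assms(1-9) by algebra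
  with assms(10) show ?thesis by simp
qed

(* When A1 = B1 = C1 = 0, the last six identities are linear in A2, ..., C3 with determinant
   (Q3 Q2 Q1 + P3 P2 P1)^2. *)
lemma outer_derivatives_eq_0_degenerate:
  fixes A1 A2 A3 B1 B2 B3 C1 C2 C3 P1 P2 P3 Q1 Q2 Q3 :: complex
  assumes "A1 = 0" "B1 = 0" "C1 = 0"
    "A1 + A2 * P3 + A3 * Q2 = B3 * P3" "B3 * P3 = C2 * Q2"
    "A2 * Q3 = B1 + B2 * P1 + B3 * Q3" "B1 + B2 * P1 + B3 * Q3 = C3 * P1"
    "A3 * P2 = B2 * Q1" "B2 * Q1 = C1 + C2 * P2 + C3 * Q1"
    and "Q3 * Q2 * Q1 + P3 * P2 * P1 \<noteq> 0"
  shows "A2 = 0" "A3 = 0"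
proof -
  have "A2 * (Q3 * Q2 * Q1 + P3 * P2 * P1)^2 = 0" "A3 * (Q3 * Q2 * Q1 + P3 * P2 * P1)^2 = 0"
    using assms(1-9) by algebra+
  with assms(10) show "A2 = 0" "A3 = 0" by simp_all
qed

section \<open>There are no nondegenerate points\<close>

lemma open_prod4_elim:
  fixes N :: "('a::topological_space \<times> 'b::topological_space \<times> 'c::topological_space \<times> 'd::topological_space) set"
  assumes "open N" "(y, y1, y2, y3) \<in> N"
  obtains U0 U1 U2 U3 where "open U0" "open U1" "open U2" "open U3"
    "y \<in> U0" "y1 \<in> U1" "y2 \<in> U2" "y3 \<in> U3" "U0 \<times> U1 \<times> U2 \<times> U3 \<subseteq> N"
proof -
  obtain U0 R1 where U0: "open U0" "open R1" "(y, y1, y2, y3) \<in> U0 \<times> R1" "U0 \<times> R1 \<subseteq> N"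
    by (rule open_prod_elim[OF assms])
  obtain U1 R2 where U1: "open U1" "open R2" "(y1, y2, y3) \<in> U1 \<times> R2" "U1 \<times> R2 \<subseteq> R1"
    by (rule open_prod_elim[OF \<open>open R1\<close>]) (use U0(3) in blast)
  obtain U2 U3 where U2: "open U2" "open U3" "(y2, y3) \<in> U2 \<times> U3" "U2 \<times> U3 \<subseteq> R2"
    by (rule open_prod_elim[OF \<open>open R2\<close>]) (use U1(3) in blast)
  have "U0 \<times> U1 \<times> U2 \<times> U3 \<subseteq> N"
    using U0(4) U1(4) U2(4) by (meson Sigma_mono order_refl order_trans)
  then show ?thesis
    using that U0 U1 U2 by simp
qed

lemma open_slices:
  fixes M :: "('a::real_normed_vector \<times> 'b::real_normed_vector \<times> 'c::real_normed_vector \<times> 'd::real_normed_vector) set"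
  assumes "open M"
  shows "open {t. (t, y1, y2, y3) \<in> M}" "open {t. (y, t, y2, y3) \<in> M}" "open {t. (y, y1, t, y3) \<in> M}"
  using continuous_open_vimage[OF assms, of "\<lambda>t. (t, y1, y2, y3)"]
    continuous_open_vimage[OF assms, of "\<lambda>t. (y, t, y2, y3)"]
    continuous_open_vimage[OF assms, of "\<lambda>t. (y, y1, t, y3)"]
  by (simp_all add: vimage_def)

context tetrahedral_system
begin

definition nondegenerate :: "complex \<Rightarrow> complex \<Rightarrow> complex \<Rightarrow> complex \<Rightarrow> bool" where
  "nondegenerate x x1 x2 x3 \<longleftrightarrow>
    pd3 f3 x x1 x2 * pd3 f2 x x3 x1 * pd3 f1 x x2 x3 \<noteq> 0 \<and>
    pd3 f3 x x1 x2 * pd3 f2 x x3 x1 * pd3 f1 x x2 x3 + pd2 f3 x x1 x2 * pd2 f2 x x3 x1 * pd2 f1 x x2 x3 \<noteq> 0"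

lemma open_nondegenerate:
  "open {(x, x1, x2, x3). nondegenerate x x1 x2 x3}"
  "open {(x, x1, x2, x3). nondegenerate x x1 x2 x3 \<and> pd1 f3 x x1 x2 \<noteq> 0}"
  "open {(x, x1, x2, x3). nondegenerate x x1 x2 x3 \<and> pd1 f3 x x1 x2 \<noteq> 0 \<and> pd1 f2 x x3 x1 \<noteq> 0}"
  "open {(x, x1, x2, x3). nondegenerate x x1 x2 x3 \<and> pd1 f2 x x3 x1 \<noteq> 0}"
  "open {(x, x1, x2, x3). nondegenerate x x1 x2 x3 \<and> pd1 f3 x x1 x2 * pd1 f2 x x3 x1 * pd1 f1 x x2 x3 \<noteq> 0}"
  unfolding nondegenerate_def split_beta'
  by (intro open_Collect_conj open_Collect_neq continuous_intros cdiff)+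

lemma exists_inner_derivative_nonzero:
  assumes "open M" "(y, y1, y2, y3) \<in> M"
  shows "\<not> (\<forall>u. f3 u = f3 0) \<Longrightarrow> \<exists>x x1 x2 x3. (x, x1, x2, x3) \<in> M \<and> pd1 f3 x x1 x2 \<noteq> 0"
    and "\<not> (\<forall>u. f2 u = f2 0) \<Longrightarrow> \<exists>x x1 x2 x3. (x, x1, x2, x3) \<in> M \<and> pd1 f2 x x3 x1 \<noteq> 0"
    and "\<not> (\<forall>u. f1 u = f1 0) \<Longrightarrow> \<exists>x x1 x2 x3. (x, x1, x2, x3) \<in> M \<and> pd1 f1 x x2 x3 \<noteq> 0"
proof -
  obtain U0 U1 U2 U3 where U: "open U0" "open U1" "open U2" "open U3"
    "y \<in> U0" "y1 \<in> U1" "y2 \<in> U2" "y3 \<in> U3" "U0 \<times> U1 \<times> U2 \<times> U3 \<subseteq> M"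
    using open_prod4_elim[OF assms] by blast
  show "\<exists>x x1 x2 x3. (x, x1, x2, x3) \<in> M \<and> pd1 f3 x x1 x2 \<noteq> 0" if "\<not> (\<forall>u. f3 u = f3 0)"
    using cdiff3_indep_first_if_pd1_eq_0[OF cdiff(3) U(1-3) U(5-7)] U(8,9) that by blast
  show "\<exists>x x1 x2 x3. (x, x1, x2, x3) \<in> M \<and> pd1 f2 x x3 x1 \<noteq> 0" if "\<not> (\<forall>u. f2 u = f2 0)"
    using cdiff3_indep_first_if_pd1_eq_0[OF cdiff(2) U(1,4,2) U(5,8,6)] U(7,9) that by blast
  show "\<exists>x x1 x2 x3. (x, x1, x2, x3) \<in> M \<and> pd1 f1 x x2 x3 \<noteq> 0" if "\<not> (\<forall>u. f1 u = f1 0)"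
    using cdiff3_indep_first_if_pd1_eq_0[OF cdiff(1) U(1,3,4) U(5,7,8)] U(6,9) that by blast
qed

lemma outer_pd2_eq_0_if_inner_derivatives_nonzero:
  assumes "nondegenerate x x1 x2 x3" "pd1 f3 x x1 x2 * pd1 f2 x x3 x1 * pd1 f1 x x2 x3 \<noteq> 0"
  shows "pd2 f1 x1 (f3 x x1 x2) (f2 x x3 x1) = 0"
  by (rule outer_derivative_eq_0_generic[OF
        chain_rule_identities[where x = x and ?x1.0 = x1 and ?x2.0 = x2 and ?x3.0 = x3]])
    (use assms in \<open>simp add: nondegenerate_def\<close>)

lemma outer_pd23_eq_0_if_indep_first:
  assumes "nondegenerate x x1 x2 x3"
    and indep: "\<And>u. f1 u = f1 0" "\<And>u. f2 u = f2 0" "\<And>u. f3 u = f3 0"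
  shows "pd2 f1 x1 (f3 x x1 x2) (f2 x x3 x1) = 0" "pd3 f1 x1 (f3 x x1 x2) (f2 x x3 x1) = 0"
  using outer_derivatives_eq_0_degenerate[OF pd1_eq_0_if_indep_first[of f1, OF indep(1)]
      pd1_eq_0_if_indep_first[of f2, OF indep(2)] pd1_eq_0_if_indep_first[of f3, OF indep(3)]
      chain_rule_identities(4-9)[where x = x and ?x1.0 = x1 and ?x2.0 = x2 and ?x3.0 = x3]]
    assms(1)
  by (simp_all add: nondegenerate_def)

(* Since f3 ignores x, moving x moves only the last inner argument x31 of f1, and x123 stays put. *)
lemma indep_first_f3_imp_f2:
  assumes nd: "nondegenerate y y1 y2 y3" and f3: "\<And>u. f3 u = f3 0"
  shows "f2 u = f2 0"
proof (rule ccontr)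
  assume "f2 u \<noteq> f2 0"
  then obtain a a1 a2 a3 where s: "nondegenerate a a1 a2 a3 \<and> pd1 f2 a a3 a1 \<noteq> 0"
    using exists_inner_derivative_nonzero(2)[OF open_nondegenerate(1), of y y1 y2 y3] nd by auto
  define A1 where "A1 = {t. nondegenerate a t a2 a3 \<and> pd1 f2 a a3 t \<noteq> 0}"
  have A1: "open A1" "a1 \<in> A1"
    unfolding A1_def using open_slices(2)[OF open_nondegenerate(4), of a a2 a3] s by auto
  have "f1 x1 v w = f1 x1 v 0" if "x1 \<in> A1" for x1 v w
  proof (rule separately_entire_indep_second_from_open_maps[of "f1 x1" "\<lambda>t. f2 t a3 x1" a "f3 a x1" a2])
    show "deriv (\<lambda>t. f2 t a3 x1) a \<noteq> 0" "deriv (f3 a x1) a2 \<noteq> 0"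
      using that by (auto simp: A1_def nondegenerate_def pd1_def pd3_def)
    show "f1 x1 (f3 a x1 b) (f2 t a3 x1) = f1 x1 (f3 a x1 b) (f2 a a3 x1)" for t b
      using tetrahedral[of x1 t b a3 a] f3[of t] f3[of a] by simp
  qed (auto intro: cdiff3_holomorphic cdiff)
  then have "pd3 f1 a a2 a3 = 0"
    using cdiff3_pd3_eq_0_if_indep_third[OF cdiff(1) A1] by blast
  with s show False
    by (simp add: nondegenerate_def)
qed

lemma not_nondegenerate_if_inner_derivatives_nonzero:
  assumes nd: "nondegenerate y y1 y2 y3"
    and inner: "pd1 f3 y y1 y2 * pd1 f2 y y3 y1 * pd1 f1 y y2 y3 \<noteq> 0"
  shows False
proof -
  define M where "M = {(x, x1, x2, x3). nondegenerate x x1 x2 x3 \<and>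
    pd1 f3 x x1 x2 * pd1 f2 x x3 x1 * pd1 f1 x x2 x3 \<noteq> 0}"
  have M: "open M" "(y, y1, y2, y3) \<in> M"
    using open_nondegenerate(5) nd inner by (auto simp: M_def)
  define A1 where "A1 = {t. (y, t, y2, y3) \<in> M}"
  have A1: "open A1" "y1 \<in> A1"
    using open_slices(2)[OF M(1)] M(2) by (auto simp: A1_def)
  have "f1 x1 v w = f1 x1 v 0" if x1: "x1 \<in> A1" for x1 v w
  proof -
    define z where "z b = f1 x1 (f3 y x1 b) (f2 y y3 x1)" for b
    have z_const: "z b = z y2" for b
    proof (rule const_if_derivative_eq_0_on_open[of z _ "{b. (y, x1, b, y3) \<in> M}" y2])
      show "(z has_field_derivative pd2 f1 x1 (f3 y x1 b) (f2 y y3 x1) * pd3 f3 y x1 b) (at b)" for b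
        unfolding z_def by (rule corner_derivatives(3))
      show "pd2 f1 x1 (f3 y x1 b) (f2 y y3 x1) * pd3 f3 y x1 b = 0"
        if "b \<in> {b. (y, x1, b, y3) \<in> M}" for b
        using outer_pd2_eq_0_if_inner_derivatives_nonzero that by (simp add: M_def)
    qed (use open_slices(3)[OF M(1)] x1 in \<open>auto simp: A1_def\<close>)
    have "f1 x1 v' w' = z y2" for v' w'
    proof (rule separately_entire_const_from_open_maps[where G = "f1 x1" and \<phi> = "\<lambda>a. f2 a y3 x1"
          and A = "{a. (a, x1, y2, y3) \<in> M}" and ?a0.0 = y and \<psi> = "\<lambda>a. f3 a x1" and B = UNIV])
      show "deriv (\<lambda>a. f2 a y3 x1) y \<noteq> 0"
        using x1 by (auto simp: A1_def M_def pd1_def)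
      show "\<exists>b\<in>UNIV. deriv (f3 a x1) b \<noteq> 0" if "a \<in> {a. (a, x1, y2, y3) \<in> M}" for a
        using that by (auto simp: M_def nondegenerate_def pd3_def)
      show "f1 x1 (f3 a x1 b) (f2 a y3 x1) = z y2" for a b
        using z_const[of b] tetrahedral[of x1 a b y3 y] by (simp add: z_def)
    qed (use open_slices(1)[OF M(1)] x1 in \<open>simp_all add: A1_def cdiff3_holomorphic cdiff\<close>)
    then show ?thesis by simp
  qed
  then have "pd3 f1 y y2 y3 = 0"
    using cdiff3_pd3_eq_0_if_indep_third[OF cdiff(1) A1] by blast
  with nd show False
    by (simp add: nondegenerate_def)
qed

lemma corner_const_on_box_if_indep_first:
  assumes indep: "\<And>u. f1 u = f1 0" "\<And>u. f2 u = f2 0" "\<And>u. f3 u = f3 0"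
    and U: "open U1" "open U2" "y1 \<in> U1" "y2 \<in> U2"
    and nd: "\<And>a b. a \<in> U1 \<Longrightarrow> b \<in> U2 \<Longrightarrow> nondegenerate y a b y3"
    and "b \<in> U2"
  shows "f1 a (f3 y a b) (f2 y y3 a) = f1 y1 (f3 y y1 y2) (f2 y y3 y1)"
proof -
  define z where "z a b = f1 a (f3 y a b) (f2 y y3 a)" for a b
  note outer = outer_pd23_eq_0_if_indep_first[OF nd indep]
  have "z a b = z y1 b"
  proof (rule const_if_derivative_eq_0_on_open[of "\<lambda>a. z a b" _ U1 y1])
    show "((\<lambda>a. z a b) has_field_derivative pd1 f1 a (f3 y a b) (f2 y y3 a)
        + pd2 f1 a (f3 y a b) (f2 y y3 a) * pd2 f3 y a b
        + pd3 f1 a (f3 y a b) (f2 y y3 a) * pd3 f2 y y3 a) (at a)" for a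
      unfolding z_def by (rule corner_derivatives(2))
  qed (use U \<open>b \<in> U2\<close> outer pd1_eq_0_if_indep_first[of f1, OF indep(1)] in simp_all)
  also have "z y1 b = z y1 y2"
  proof (rule const_if_derivative_eq_0_on_open[of "z y1" _ U2 y2])
    show "(z y1 has_field_derivative pd2 f1 y1 (f3 y y1 b) (f2 y y3 y1) * pd3 f3 y y1 b) (at b)" for b
      unfolding z_def by (rule corner_derivatives(3))
  qed (use U outer in simp_all)
  finally show ?thesis
    by (simp add: z_def)
qed

lemma not_nondegenerate_if_indep_first:
  assumes nd: "nondegenerate y y1 y2 y3"
    and indep: "\<And>u. f1 u = f1 0" "\<And>u. f2 u = f2 0" "\<And>u. f3 u = f3 0"
  shows False
proof -
  from nd have "(y, y1, y2, y3) \<in> {(x, x1, x2, x3). nondegenerate x x1 x2 x3}" by simp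
  then obtain U0 U1 U2 U3 where U: "open U0" "open U1" "open U2" "open U3"
    "y \<in> U0" "y1 \<in> U1" "y2 \<in> U2" "y3 \<in> U3"
    "U0 \<times> U1 \<times> U2 \<times> U3 \<subseteq> {(x, x1, x2, x3). nondegenerate x x1 x2 x3}"
    by (rule open_prod4_elim[OF open_nondegenerate(1)])
  have box: "nondegenerate y a b y3" if "a \<in> U1" "b \<in> U2" for a b
  proof -
    have "(y, a, b, y3) \<in> U0 \<times> U1 \<times> U2 \<times> U3"
      using U(5,8) that by simp
    then have "(y, a, b, y3) \<in> {(x, x1, x2, x3). nondegenerate x x1 x2 x3}"
      by (rule subsetD[OF U(9)])
    then show ?thesis by simp
  qed
  have corner_const: "f1 a (f3 y a b) (f2 y y3 a) = f1 y1 (f3 y y1 y2) (f2 y y3 y1)" if "b \<in> U2" for a b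
    by (rule corner_const_on_box_if_indep_first[OF indep U(2,3,6,7)]) (use box that in auto)
  have "f1 0 v w = f1 y1 (f3 y y1 y2) (f2 y y3 y1)" for v w
  proof (rule separately_entire_const_from_open_maps[where G = "f1 0" and \<phi> = "f2 y y3"
        and A = U1 and ?a0.0 = y1 and \<psi> = "f3 y" and B = U2])
    show "deriv (f2 y y3) y1 \<noteq> 0"
      using nd by (simp add: nondegenerate_def pd3_def)
    show "\<exists>b\<in>U2. deriv (f3 y a) b \<noteq> 0" if "a \<in> U1" for a
      using box[OF that U(7)] U(7) by (auto simp: nondegenerate_def pd3_def)
    show "f1 0 (f3 y a b) (f2 y y3 a) = f1 y1 (f3 y y1 y2) (f2 y y3 y1)" if "a \<in> U1" "b \<in> U2" for a b
      using corner_const[OF that(2), of a] indep(1)[of a] by simp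
  qed (use U in \<open>simp_all add: cdiff3_holomorphic cdiff\<close>)
  then have "f1 u v w = f1 u v 0" for u v w
    using indep(1)[of u] by simp
  then have "pd3 f1 y y2 y3 = 0"
    using cdiff3_pd3_eq_0_if_indep_third[OF cdiff(1) open_UNIV UNIV_I] by blast
  with nd show False
    by (simp add: nondegenerate_def)
qed

end

context tetrahedral_system
begin

lemma rotated_nondegenerate_iff:
  "rotated.nondegenerate x x2 x3 x1 \<longleftrightarrow> nondegenerate x x1 x2 x3"
  unfolding nondegenerate_def rotated.nondegenerate_def by (simp add: ac_simps)

end

context tetrahedral_system
begin

lemma indep_first_all_if_any:
  assumes nd: "nondegenerate x x1 x2 x3"
    and "(\<forall>u. f1 u = f1 0) \<or> (\<forall>u. f2 u = f2 0) \<or> (\<forall>u. f3 u = f3 0)"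
  shows "(\<forall>u. f1 u = f1 0) \<and> (\<forall>u. f2 u = f2 0) \<and> (\<forall>u. f3 u = f3 0)"
proof -
  from nd have nd_rotated: "rotated.nondegenerate x x2 x3 x1" "rotated.rotated.nondegenerate x x3 x1 x2"
    by (simp_all add: rotated_nondegenerate_iff rotated.rotated_nondegenerate_iff)
  have "\<forall>u. f2 u = f2 0" if "\<forall>u. f3 u = f3 0"
    using indep_first_f3_imp_f2[OF nd] that by blast
  moreover have "\<forall>u. f1 u = f1 0" if "\<forall>u. f2 u = f2 0"
    using rotated.rotated.indep_first_f3_imp_f2[OF nd_rotated(2)] that by blast
  moreover have "\<forall>u. f3 u = f3 0" if "\<forall>u. f1 u = f1 0"
    using rotated.indep_first_f3_imp_f2[OF nd_rotated(1)] that by blast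
  ultimately show ?thesis
    using assms(2) by blast
qed

lemma exists_nondegenerate_inner_derivatives_nonzero:
  assumes nd: "nondegenerate x x1 x2 x3"
    and "\<not> (\<forall>u. f1 u = f1 0)" "\<not> (\<forall>u. f2 u = f2 0)" "\<not> (\<forall>u. f3 u = f3 0)"
  obtains c c1 c2 c3 where "nondegenerate c c1 c2 c3"
    "pd1 f3 c c1 c2 * pd1 f2 c c3 c1 * pd1 f1 c c2 c3 \<noteq> 0"
proof -
  have "(x, x1, x2, x3) \<in> {(x, x1, x2, x3). nondegenerate x x1 x2 x3}"
    using nd by simp
  from exists_inner_derivative_nonzero(1)[OF open_nondegenerate(1) this] assms(4)
  obtain a a1 a2 a3 where "nondegenerate a a1 a2 a3 \<and> pd1 f3 a a1 a2 \<noteq> 0"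
    by auto
  then have "(a, a1, a2, a3) \<in> {(x, x1, x2, x3). nondegenerate x x1 x2 x3 \<and> pd1 f3 x x1 x2 \<noteq> 0}"
    by simp
  from exists_inner_derivative_nonzero(2)[OF open_nondegenerate(2) this] assms(3)
  obtain b b1 b2 b3 where "nondegenerate b b1 b2 b3 \<and> pd1 f3 b b1 b2 \<noteq> 0 \<and> pd1 f2 b b3 b1 \<noteq> 0"
    by auto
  then have "(b, b1, b2, b3) \<in> {(x, x1, x2, x3). nondegenerate x x1 x2 x3 \<and>
      pd1 f3 x x1 x2 \<noteq> 0 \<and> pd1 f2 x x3 x1 \<noteq> 0}"
    by simp
  from exists_inner_derivative_nonzero(3)[OF open_nondegenerate(3) this] assms(2)
  show ?thesis
    using that by auto
qed

lemma not_nondegenerate: "\<not> nondegenerate x x1 x2 x3"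
proof
  assume nd: "nondegenerate x x1 x2 x3"
  show False
  proof (cases "(\<forall>u. f1 u = f1 0) \<or> (\<forall>u. f2 u = f2 0) \<or> (\<forall>u. f3 u = f3 0)")
    case True
    then show False
      using indep_first_all_if_any[OF nd] not_nondegenerate_if_indep_first[OF nd] by blast
  next
    case False
    then obtain c c1 c2 c3 where "nondegenerate c c1 c2 c3"
      "pd1 f3 c c1 c2 * pd1 f2 c c3 c1 * pd1 f1 c c2 c3 \<noteq> 0"
      using exists_nondegenerate_inner_derivatives_nonzero[OF nd] by blast
    then show False
      by (rule not_nondegenerate_if_inner_derivatives_nonzero)
  qed
qed

end

theorem proposition1:
  fixes f1 f2 f3 :: "complex \<Rightarrow> complex \<Rightarrow> complex \<Rightarrow> complex"
  assumes "cdiff3 f1" and "cdiff3 f2" and "cdiff3 f3"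
    and consistent: "\<And>x x1 x2 x3.
      f1 x1 (f3 x x1 x2) (f2 x x3 x1) = f2 x2 (f1 x x2 x3) (f3 x x1 x2) \<and>
      f2 x2 (f1 x x2 x3) (f3 x x1 x2) = f3 x3 (f2 x x3 x1) (f1 x x2 x3)"
    and indep: "\<exists>z. \<forall>x x1 x2 x3. f1 x1 (f3 x x1 x2) (f2 x x3 x1) = z x1 x2 x3"
  shows "\<forall>x x1 x2 x3.
      pd3 f3 x x1 x2 * pd3 f2 x x3 x1 * pd3 f1 x x2 x3 =
      - (pd2 f3 x x1 x2 * pd2 f2 x x3 x1 * pd2 f1 x x2 x3)"
proof (intro allI)
  fix x x1 x2 x3
  obtain z where z: "\<And>x x1 x2 x3. f1 x1 (f3 x x1 x2) (f2 x x3 x1) = z x1 x2 x3"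
    using indep by blast
  have system: "tetrahedral_system f1 f2 f3"
  proof
    fix x x' x1 x2 x3
    show "f1 x1 (f3 x x1 x2) (f2 x x3 x1) = f2 x2 (f1 x x2 x3) (f3 x x1 x2)"
      "f2 x2 (f1 x x2 x3) (f3 x x1 x2) = f3 x3 (f2 x x3 x1) (f1 x x2 x3)"
      using consistent by blast+
    show "f1 x1 (f3 x x1 x2) (f2 x x3 x1) = f1 x1 (f3 x' x1 x2) (f2 x' x3 x1)"
      by (simp only: z)
  qed fact+
  interpret tetrahedral_system f1 f2 f3 by (rule system)
  interpret swapped: tetrahedral_system "\<lambda>u v w. f1 u w v" "\<lambda>u v w. f3 u w v" "\<lambda>u v w. f2 u w v"
    by (rule tetrahedral_system_swap[OF system])
  \<comment> \<open>Swapping the last two arguments of every \<open>f\<^sub>i\<close> exchanges \<open>pd2\<close> and \<open>pd3\<close>.\<close>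
  have "\<not> nondegenerate x x1 x2 x3" "\<not> swapped.nondegenerate x x1 x3 x2"
    by (rule not_nondegenerate swapped.not_nondegenerate)+
  then show "pd3 f3 x x1 x2 * pd3 f2 x x3 x1 * pd3 f1 x x2 x3 =
      - (pd2 f3 x x1 x2 * pd2 f2 x x3 x1 * pd2 f1 x x2 x3)"
    unfolding nondegenerate_def swapped.nondegenerate_def
    by (auto simp: pd2_def pd3_def eq_neg_iff_add_eq_0 ac_simps)
qed

end
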